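(* Let $T$ be a graph on a countably infinite set $X$ with maximum degree at most $d$, let $\mu$ be a $T$-invariant mean on $X$ with associated regular Borel probability measure $\bar\mu$ on $\beta X$, and let $\mathcal G(T)$ be the associated graphing on $\beta X$. Then for every $r\ge1$ and every rooted finite graph $H$ of radius $r$ with maximum degree at most $d$, $$\mu(A(T,H))=\bar\mu(A(\mathcal G(T),H)).$$
   Context: A mean on $X$ is a finitely additive $\mu:2^X\to[0,1]$ with $\mu(X)=1$; $\bar\mu$ is the unique regular Borel probability on the Stone–Čech compactification $\beta X$ (ultrafilters on $X$) with $\bar\mu(U_A)=\mu(A)$, $U_A=\{\omega:A\in\omega\}$. A mean is $T$-invariant if it is invariant under some (equivalently every) action of a finitely generated group on $X$ whose Schreier graph with respect to some finite symmetric generating set is $T$ (Schreier graph: edge $\{x,y\}$ when $x\ne y$ and $s(x)=y$ for a generator $s$). Bijections $s$ of $X$ extend to $\beta X$ by $\tilde s(\omega)=\{s(A):A\in\omega\}$; $\mathcal G(T)$ is the graph on $\beta X$ with an edge $\{\omega,\omega'\}$ when $\omega\ne\omega'$ and $\tilde s(\omega)=\omega'$ for a generator $s$ of such an action (this does not depend on the chosen action). A rooted graph has radius $r$ if the maximal distance from the root is $r$. $A(T,H)$ is the set of $x\in X$ whose $r$-neighbourhood in $T$ rooted at $x$ is rooted isomorphic to $H$, and $A(\mathcal G(T),H)$ is the set of $\omega\in\beta X$ whose $r$-neighbourhood in $\mathcal G(T)$ is rooted isomorphic to $H$. *)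

theory Defs
  imports "HOL-Probability.Probability"
begin

definition ultrafilter_on :: "'a set set \<Rightarrow> bool" where
  "ultrafilter_on w \<longleftrightarrow> UNIV \<in> w \<and> {} \<notin> w \<and>
     (\<forall>A B. A \<in> w \<and> A \<subseteq> B \<longrightarrow> B \<in> w) \<and>
     (\<forall>A B. A \<in> w \<and> B \<in> w \<longrightarrow> A \<inter> B \<in> w) \<and>
     (\<forall>A. A \<in> w \<or> - A \<in> w)"

definition betaX :: "'a set set set" where
  "betaX = {w. ultrafilter_on w}"

definition UA :: "'a set \<Rightarrow> 'a set set set" where
  "UA A = {w \<in> betaX. A \<in> w}"

definition stone_open :: "'a set set set \<Rightarrow> bool" where
  "stone_open W \<longleftrightarrow> W \<subseteq> betaX \<and> (\<forall>w\<in>W. \<exists>A. w \<in> UA A \<and> UA A \<subseteq> W)"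

definition stone_compact :: "'a set set set \<Rightarrow> bool" where
  "stone_compact K \<longleftrightarrow> K \<subseteq> betaX \<and>
     (\<forall>C. (\<forall>W\<in>C. stone_open W) \<and> K \<subseteq> \<Union>C \<longrightarrow> (\<exists>F\<subseteq>C. finite F \<and> K \<subseteq> \<Union>F))"

definition regular_borel_prob :: "'a set set measure \<Rightarrow> bool" where
  "regular_borel_prob M \<longleftrightarrow> prob_space M \<and> space M = betaX \<and>
     sets M = sigma_sets betaX {W. stone_open W} \<and>
     (\<forall>B\<in>sets M.
        measure M B = (SUP K\<in>{K. K \<subseteq> B \<and> stone_compact K}. measure M K) \<and>
        measure M B = (INF U\<in>{U. B \<subseteq> U \<and> stone_open U}. measure M U))"

definition is_mean :: "('a set \<Rightarrow> real) \<Rightarrow> bool" where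
  "is_mean \<mu> \<longleftrightarrow> (\<forall>A. 0 \<le> \<mu> A \<and> \<mu> A \<le> 1) \<and> \<mu> UNIV = 1 \<and>
     (\<forall>A B. A \<inter> B = {} \<longrightarrow> \<mu> (A \<union> B) = \<mu> A + \<mu> B)"

(* S: finite symmetric generating set of a group acting on 'a (given by bijections) *)
definition sym_gen_set :: "('a \<Rightarrow> 'a) set \<Rightarrow> bool" where
  "sym_gen_set S \<longleftrightarrow> finite S \<and> (\<forall>s\<in>S. bij s \<and> inv s \<in> S)"

definition schreier_graph :: "('a \<Rightarrow> 'a) set \<Rightarrow> 'a \<Rightarrow> 'a \<Rightarrow> bool" where
  "schreier_graph S x y \<longleftrightarrow> x \<noteq> y \<and> (\<exists>s\<in>S. s x = y)"

(* invariance under the generators (equivalently under the generated group) *)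
definition invariant_mean :: "('a \<Rightarrow> 'a) set \<Rightarrow> ('a set \<Rightarrow> real) \<Rightarrow> bool" where
  "invariant_mean S \<mu> \<longleftrightarrow> (\<forall>s\<in>S. \<forall>A. \<mu> (s ` A) = \<mu> A)"

definition ext_map :: "('a \<Rightarrow> 'a) \<Rightarrow> 'a set set \<Rightarrow> 'a set set" where
  "ext_map s w = {s ` A | A. A \<in> w}"

definition graphing :: "('a \<Rightarrow> 'a) set \<Rightarrow> 'a set set \<Rightarrow> 'a set set \<Rightarrow> bool" where
  "graphing S w w' \<longleftrightarrow> w \<in> betaX \<and> w' \<in> betaX \<and> w \<noteq> w' \<and> (\<exists>s\<in>S. ext_map s w = w')"

definition gball :: "('b \<Rightarrow> 'b \<Rightarrow> bool) \<Rightarrow> nat \<Rightarrow> 'b \<Rightarrow> 'b set" where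
  "gball G r x = {y. \<exists>n\<le>r. (G ^^ n) x y}"

definition nbhd_iso :: "('b \<Rightarrow> 'b \<Rightarrow> bool) \<Rightarrow> nat \<Rightarrow> 'b \<Rightarrow> 'c set \<Rightarrow> ('c \<Rightarrow> 'c \<Rightarrow> bool) \<Rightarrow> 'c \<Rightarrow> bool" where
  "nbhd_iso G r x V E h \<longleftrightarrow> (\<exists>f. bij_betw f (gball G r x) V \<and> f x = h \<and>
     (\<forall>y\<in>gball G r x. \<forall>z\<in>gball G r x. G y z \<longleftrightarrow> E (f y) (f z)))"

definition Aset :: "'b set \<Rightarrow> ('b \<Rightarrow> 'b \<Rightarrow> bool) \<Rightarrow> nat \<Rightarrow> 'c set \<Rightarrow> ('c \<Rightarrow> 'c \<Rightarrow> bool) \<Rightarrow> 'c \<Rightarrow> 'b set" where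
  "Aset Vert G r V E h = {x \<in> Vert. nbhd_iso G r x V E h}"

definition rooted_graph_radius :: "'c set \<Rightarrow> ('c \<Rightarrow> 'c \<Rightarrow> bool) \<Rightarrow> 'c \<Rightarrow> nat \<Rightarrow> bool" where
  "rooted_graph_radius V E h r \<longleftrightarrow> finite V \<and> h \<in> V \<and>
     (\<forall>y z. E y z \<longrightarrow> y \<in> V \<and> z \<in> V) \<and> (\<forall>y z. E y z \<longrightarrow> E z y) \<and> (\<forall>y. \<not> E y y) \<and>
     V = gball E r h \<and> (\<exists>y\<in>V. y \<notin> gball E (r - 1) h)"

definition max_degree_le :: "'b set \<Rightarrow> ('b \<Rightarrow> 'b \<Rightarrow> bool) \<Rightarrow> nat \<Rightarrow> bool" where
  "max_degree_le V G d \<longleftrightarrow> (\<forall>x\<in>V. finite {y. G x y} \<and> card {y. G x y} \<le> d)"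

end

theory Submission imports Defs begin

(* Let the generating bijections S act on X (giving the Schreier graph T) and, via
   ext_map, on betaX (giving the graphing G(T)).  For every point, its r-neighbourhood in such an
   action graph is the image of the words of length at most r, and its rooted isomorphism type is
   determined by the "coincidence pattern" of the point: which pairs of words of length at most
   r+1 send it to the same point.  For an ultrafilter w the key fact is that two extended
   bijections p, q agree at w iff {x. p x = q x} belongs to w; this rests on a three-colouring
   of every injection of a countable set that separates each non-fixed point from its image.
   Hence w has the same pattern as all points of some set Q in w (an atom of the finitely many
   coincidence sets), so w lies in A(G(T),H) iff A(T,H) belongs to w, i.e.
   A(G(T),H) = U_{A(T,H)}.  This set is a basic open set, hence Borel, and its measure is
   mu(A(T,H)) by the assumption relating M and mu. *)

section \<open>Ultrafilters\<close>

lemma ultrafilterD: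
  assumes "w \<in> betaX"
  shows uf_UNIV: "UNIV \<in> w" and uf_empty: "{} \<notin> w"
    and uf_mono: "\<And>A B. A \<in> w \<Longrightarrow> A \<subseteq> B \<Longrightarrow> B \<in> w"
    and uf_Int: "\<And>A B. A \<in> w \<Longrightarrow> B \<in> w \<Longrightarrow> A \<inter> B \<in> w"
    and uf_Compl: "\<And>A. A \<notin> w \<Longrightarrow> - A \<in> w"
  using assms unfolding betaX_def ultrafilter_on_def by blast+

lemma uf_not_Compl: "w \<in> betaX \<Longrightarrow> A \<in> w \<Longrightarrow> - A \<notin> w"
  using uf_Int[of w A "- A"] uf_empty[of w] by auto

lemma uf_Un: assumes "w \<in> betaX" "A \<union> B \<in> w" shows "A \<in> w \<or> B \<in> w"
  using assms uf_Compl[OF assms(1)] uf_Int[OF assms(1)] uf_not_Compl[OF assms(1)]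
  by (metis Compl_Un)

lemma uf_Inter:
  assumes "w \<in> betaX" "finite I" "\<And>i. i \<in> I \<Longrightarrow> B i \<in> w"
  shows "(\<Inter>i\<in>I. B i) \<in> w"
  using assms(2,3)
  by (induction I rule: finite_induct) (simp_all add: uf_UNIV[OF assms(1)] uf_Int[OF assms(1)])

lemma uf_atom:
  assumes "w \<in> betaX" "finite I"
  obtains Q where "Q \<in> w" "\<And>x i. x \<in> Q \<Longrightarrow> i \<in> I \<Longrightarrow> x \<in> B i \<longleftrightarrow> B i \<in> w"
proof
  define C where "C i = (if B i \<in> w then B i else - B i)" for i
  show "(\<Inter>i\<in>I. C i) \<in> w"
    by (rule uf_Inter[OF assms]) (simp add: C_def uf_Compl[OF assms(1)])
  show "x \<in> B i \<longleftrightarrow> B i \<in> w" if "x \<in> (\<Inter>i\<in>I. C i)" "i \<in> I" for x i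
    using that by (auto simp: C_def split: if_splits)
qed

lemma uf_decides:
  assumes "w \<in> betaX" "Q \<in> w" "\<And>x. x \<in> Q \<Longrightarrow> x \<in> A \<longleftrightarrow> P"
  shows "A \<in> w \<longleftrightarrow> P"
proof (cases P)
  case True
  then show ?thesis using assms uf_mono[OF assms(1), of Q A] by blast
next
  case False
  then have "- A \<in> w" using assms uf_mono[OF assms(1), of Q "- A"] by blast
  then show ?thesis using False uf_not_Compl[OF assms(1)] by blast
qed

section \<open>Extension of maps to betaX\<close>

lemma ext_map_vimage: assumes "bij g" shows "ext_map g w = {B. g -` B \<in> w}"
proof (intro set_eqI iffI)
  fix B assume "B \<in> ext_map g w"
  then obtain A where "A \<in> w" "B = g ` A" unfolding ext_map_def by auto
  then show "B \<in> {B. g -` B \<in> w}" using assms by (simp add: bij_is_inj inj_vimage_image_eq)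
next
  fix B assume "B \<in> {B. g -` B \<in> w}"
  moreover have "B = g ` (g -` B)" using assms by (simp add: bij_is_surj surj_image_vimage_eq)
  ultimately show "B \<in> ext_map g w" unfolding ext_map_def by blast
qed

lemma ext_map_betaX: assumes "bij g" "w \<in> betaX" shows "ext_map g w \<in> betaX"
proof -
  note uf = ultrafilterD[OF assms(2)]
  have "ultrafilter_on {B. g -` B \<in> w}"
    unfolding ultrafilter_on_def
    using uf(1,2,4,5) uf(3)[OF _ vimage_mono] by (auto simp: vimage_Compl)
  then show ?thesis by (simp add: ext_map_vimage[OF assms(1)] betaX_def)
qed

lemma ext_map_comp: "ext_map (s \<circ> t) w = ext_map s (ext_map t w)"
proof -
  have "(s \<circ> t) ` A = s ` (t ` A)" for A by (simp add: image_comp)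
  then show ?thesis unfolding ext_map_def by blast
qed

lemma ext_map_id: "ext_map id w = w"
  unfolding ext_map_def by auto

section \<open>Three-colouring of an injection\<close>

lemma least_avoiding_two:
  "(LEAST k::nat. k \<noteq> a \<and> k \<noteq> b) \<noteq> a \<and> (LEAST k::nat. k \<noteq> a \<and> k \<noteq> b) \<noteq> b \<and>
   (LEAST k::nat. k \<noteq> a \<and> k \<noteq> b) \<le> 2"
proof -
  have "\<exists>k::nat. k \<le> 2 \<and> k \<noteq> a \<and> k \<noteq> b" by presburger
  then obtain k :: nat where k: "k \<le> 2" "k \<noteq> a \<and> k \<noteq> b" by blast
  have "(LEAST k::nat. k \<noteq> a \<and> k \<noteq> b) \<noteq> a \<and> (LEAST k::nat. k \<noteq> a \<and> k \<noteq> b) \<noteq> b"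
    by (rule LeastI[of _ k]) (use k in auto)
  moreover have "(LEAST k::nat. k \<noteq> a \<and> k \<noteq> b) \<le> k"
    by (rule Least_le) (use k in auto)
  ultimately show ?thesis using k(1) by linarith
qed

(* Greedy colouring along an enumeration idx: x avoids the colours of its image g x and its
   preimage inv g x whenever these come earlier in the enumeration (3 = "no constraint"). *)
function greedy_colour :: "('a \<Rightarrow> 'a) \<Rightarrow> ('a \<Rightarrow> nat) \<Rightarrow> 'a \<Rightarrow> nat" where
  "greedy_colour g idx x =
     (LEAST k. k \<noteq> (if idx (g x) < idx x then greedy_colour g idx (g x) else 3) \<and>
               k \<noteq> (if idx (inv g x) < idx x then greedy_colour g idx (inv g x) else 3))"
  by auto
termination by (relation "Wellfounded.measure (\<lambda>(g, idx, x). idx x)") auto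

declare greedy_colour.simps [simp del]

lemma three_colouring:
  fixes g :: "'a \<Rightarrow> 'a"
  assumes "countable (UNIV :: 'a set)" "inj g"
  obtains c :: "'a \<Rightarrow> nat" where "\<And>x. c x \<le> 2" "\<And>x. g x \<noteq> x \<Longrightarrow> c (g x) \<noteq> c x"
proof -
  obtain idx :: "'a \<Rightarrow> nat" where idx: "inj idx" using assms(1) unfolding countable_def by blast
  let ?c = "greedy_colour g idx"
  have avoid:
    "?c x \<noteq> (if idx (g x) < idx x then ?c (g x) else 3)"
    "?c x \<noteq> (if idx (inv g x) < idx x then ?c (inv g x) else 3)" for x
    by (subst greedy_colour.simps, rule least_avoiding_two[THEN conjunct1])
      (subst greedy_colour.simps, rule least_avoiding_two[THEN conjunct2, THEN conjunct1])
  have bound: "?c x \<le> 2" for x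
    by (subst greedy_colour.simps) (rule least_avoiding_two[THEN conjunct2, THEN conjunct2])
  have separating: "?c (g x) \<noteq> ?c x" if "g x \<noteq> x" for x
  proof -
    have "idx (g x) \<noteq> idx x" using idx that by (meson injD)
    moreover have "inv g (g x) = x" using assms(2) by simp
    ultimately show ?thesis using avoid[of x] avoid(2)[of "g x"] by (auto split: if_splits)
  qed
  show thesis using that[of ?c] bound separating by blast
qed

lemma ext_map_fixed:
  fixes g :: "'a \<Rightarrow> 'a"
  assumes "countable (UNIV :: 'a set)" "inj g" "w \<in> betaX" "ext_map g w = w"
  shows "{x. g x = x} \<in> w"
proof (rule ccontr)
  assume "{x. g x = x} \<notin> w"
  then have moved: "{x. g x \<noteq> x} \<in> w" using uf_Compl[OF assms(3)] by (simp add: Collect_neg_eq)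
  obtain c :: "'a \<Rightarrow> nat" where c: "\<And>x. c x \<le> 2" "\<And>x. g x \<noteq> x \<Longrightarrow> c (g x) \<noteq> c x"
    using three_colouring[OF assms(1,2)] by blast
  define C where "C k = {x. g x \<noteq> x \<and> c x = k}" for k
  have "c x = 0 \<or> c x = 1 \<or> c x = 2" for x using c(1)[of x] by presburger
  then have "{x. g x \<noteq> x} = C 0 \<union> (C 1 \<union> C 2)" unfolding C_def by blast
  then have "C 0 \<in> w \<or> C 1 \<in> w \<or> C 2 \<in> w" using moved uf_Un[OF assms(3)] by metis
  then obtain k where k: "C k \<in> w" by blast
  have "g ` C k \<in> ext_map g w" unfolding ext_map_def using k by blast
  then have "g ` C k \<inter> C k \<in> w" using assms(4) k uf_Int[OF assms(3)] by simp
  moreover have "g ` C k \<inter> C k = {}" using c(2) unfolding C_def by force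
  ultimately show False using uf_empty[OF assms(3)] by simp
qed

lemma ext_map_eq_iff:
  fixes p q :: "'a \<Rightarrow> 'a"
  assumes "countable (UNIV :: 'a set)" "bij p" "bij q" "w \<in> betaX"
  shows "ext_map p w = ext_map q w \<longleftrightarrow> {x. p x = q x} \<in> w"
proof
  assume agree: "{x. p x = q x} \<in> w"
  have "p -` B \<in> w \<longleftrightarrow> q -` B \<in> w" for B
  proof -
    have "p -` B \<inter> {x. p x = q x} = q -` B \<inter> {x. p x = q x}" by auto
    then show ?thesis using uf_mono[OF assms(4)] uf_Int[OF assms(4)] agree by (metis inf_le1)
  qed
  then show "ext_map p w = ext_map q w" by (simp add: ext_map_vimage assms(2,3))
next
  assume eq: "ext_map p w = ext_map q w"
  have "ext_map (inv q \<circ> p) w = ext_map (inv q \<circ> q) w"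
    by (simp add: ext_map_comp eq)
  also have "\<dots> = w" using assms(3) by (simp add: bij_is_inj ext_map_id)
  finally have "{x. (inv q \<circ> p) x = x} \<in> w"
    using ext_map_fixed[OF assms(1) _ assms(4)] assms(2,3)
    by (meson bij_betw_inv_into bij_comp bij_is_inj)
  moreover have "(inv q \<circ> p) x = x \<longleftrightarrow> p x = q x" for x
    using assms(3) by (metis bij_inv_eq_iff comp_apply)
  ultimately show "{x. p x = q x} \<in> w" by simp
qed

section \<open>Words and balls in action graphs\<close>

fun act_word :: "('s \<Rightarrow> 'b \<Rightarrow> 'b) \<Rightarrow> 's list \<Rightarrow> 'b \<Rightarrow> 'b" where
  "act_word F [] x = x"
| "act_word F (s # u) x = F s (act_word F u x)"

definition words :: "'s set \<Rightarrow> nat \<Rightarrow> 's list set" where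
  "words S n = {u. set u \<subseteq> S \<and> length u \<le> n}"

definition action_graph :: "'b set \<Rightarrow> 's set \<Rightarrow> ('s \<Rightarrow> 'b \<Rightarrow> 'b) \<Rightarrow> 'b \<Rightarrow> 'b \<Rightarrow> bool" where
  "action_graph D S F y z \<longleftrightarrow> y \<noteq> z \<and> y \<in> D \<and> z \<in> D \<and> (\<exists>s\<in>S. F s y = z)"

lemma finite_words: "finite S \<Longrightarrow> finite (words S n)"
  unfolding words_def by (rule finite_lists_length_le)

lemma words_mono: "m \<le> n \<Longrightarrow> words S m \<subseteq> words S n"
  unfolding words_def by auto

lemma act_word_closed:
  assumes "\<And>s y. s \<in> S \<Longrightarrow> y \<in> D \<Longrightarrow> F s y \<in> D" "x \<in> D" "set u \<subseteq> S"
  shows "act_word F u x \<in> D"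
  using assms(3) by (induction u) (auto simp: assms(1,2))

lemma action_graph_path_word:
  assumes "(action_graph D S F ^^ n) x y"
  shows "\<exists>u. set u \<subseteq> S \<and> length u \<le> n \<and> y = act_word F u x"
  using assms
proof (induction n arbitrary: y)
  case 0 then show ?case by (intro exI[of _ "[]"]) auto
next
  case (Suc n)
  then obtain y' where y': "(action_graph D S F ^^ n) x y'" "action_graph D S F y' y"
    by (meson relpowp_Suc_E)
  obtain u where u: "set u \<subseteq> S" "length u \<le> n" "y' = act_word F u x" using Suc.IH y'(1) by blast
  obtain s where "s \<in> S" "F s y' = y" using y'(2) unfolding action_graph_def by blast
  then show ?case using u by (intro exI[of _ "s # u"]) auto
qed

(* Conversely, the value of a word u is reached from x by a path of length \<le> length u
   (letters acting trivially contribute no edge). *)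
lemma word_action_graph_path:
  assumes closed: "\<And>s y. s \<in> S \<Longrightarrow> y \<in> D \<Longrightarrow> F s y \<in> D" and x: "x \<in> D" and "set u \<subseteq> S"
  shows "\<exists>n\<le>length u. (action_graph D S F ^^ n) x (act_word F u x)"
  using assms(3)
proof (induction u)
  case Nil then show ?case by auto
next
  case (Cons s u)
  then obtain n where n: "n \<le> length u" "(action_graph D S F ^^ n) x (act_word F u x)" by auto
  show ?case
  proof (cases "F s (act_word F u x) = act_word F u x")
    case True then show ?thesis using n by (intro exI[of _ n]) auto
  next
    case False
    have "action_graph D S F (act_word F u x) (act_word F (s # u) x)"
      using False Cons.prems closed[of s]
        act_word_closed[where F = F and S = S and D = D, OF closed x]
      unfolding action_graph_def by auto
    then have "(action_graph D S F ^^ Suc n) x (act_word F (s # u) x)"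
      using relpowp_Suc_I[OF n(2)] by blast
    then show ?thesis using n(1) by (intro exI[of _ "Suc n"]) auto
  qed
qed

lemma gball_action_graph:
  assumes closed: "\<And>s y. s \<in> S \<Longrightarrow> y \<in> D \<Longrightarrow> F s y \<in> D" and x: "x \<in> D"
  shows "gball (action_graph D S F) r x = (\<lambda>u. act_word F u x) ` words S r"
  unfolding gball_def words_def
proof (intro set_eqI iffI)
  fix y assume "y \<in> {y. \<exists>n\<le>r. (action_graph D S F ^^ n) x y}"
  then obtain n where "n \<le> r" and path: "(action_graph D S F ^^ n) x y" by blast
  then obtain u where "set u \<subseteq> S" "length u \<le> r" "y = act_word F u x"
    using action_graph_path_word[OF path] by auto
  then show "y \<in> (\<lambda>u. act_word F u x) ` {u. set u \<subseteq> S \<and> length u \<le> r}" by blast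
next
  fix y assume "y \<in> (\<lambda>u. act_word F u x) ` {u. set u \<subseteq> S \<and> length u \<le> r}"
  then obtain u where u: "set u \<subseteq> S" "length u \<le> r" "y = act_word F u x" by blast
  then obtain n where "n \<le> length u" "(action_graph D S F ^^ n) x y"
    using word_action_graph_path[where D = D and S = S and F = F, OF closed x u(1)] by blast
  then show "y \<in> {y. \<exists>n\<le>r. (action_graph D S F ^^ n) x y}" using u(2) le_trans by blast
qed

lemma action_graph_word_edge:
  assumes closed: "\<And>s y. s \<in> S \<Longrightarrow> y \<in> D \<Longrightarrow> F s y \<in> D" and x: "x \<in> D"
    and "set u \<subseteq> S" "set v \<subseteq> S"
  shows "action_graph D S F (act_word F u x) (act_word F v x) \<longleftrightarrow>
         act_word F u x \<noteq> act_word F v x \<and> (\<exists>s\<in>S. act_word F (s # u) x = act_word F v x)"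
  using act_word_closed[where F = F and S = S and D = D, OF closed x] assms(3,4)
  unfolding action_graph_def by auto

section \<open>Transfer of neighbourhood types\<close>

lemma gball_iso_of_same_pattern:
  assumes cla: "\<And>s y. s \<in> S \<Longrightarrow> y \<in> Da \<Longrightarrow> Fa s y \<in> Da" and xa: "xa \<in> Da"
    and clb: "\<And>s y. s \<in> S \<Longrightarrow> y \<in> Db \<Longrightarrow> Fb s y \<in> Db" and xb: "xb \<in> Db"
    and same: "\<And>u v. u \<in> words S (Suc r) \<Longrightarrow> v \<in> words S (Suc r) \<Longrightarrow>
                 act_word Fa u xa = act_word Fa v xa \<longleftrightarrow> act_word Fb u xb = act_word Fb v xb"
  defines "Ga \<equiv> action_graph Da S Fa" and "Gb \<equiv> action_graph Db S Fb"
  obtains \<psi> where "bij_betw \<psi> (gball Gb r xb) (gball Ga r xa)" "\<psi> xb = xa"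
    "\<And>y z. y \<in> gball Gb r xb \<Longrightarrow> z \<in> gball Gb r xb \<Longrightarrow> Gb y z \<longleftrightarrow> Ga (\<psi> y) (\<psi> z)"
proof -
  define ea where "ea u = act_word Fa u xa" for u
  define eb where "eb u = act_word Fb u xb" for u
  have balla: "gball Ga r xa = ea ` words S r"
    unfolding ea_def Ga_def
    by (rule gball_action_graph[where D = Da and S = S and F = Fa, OF cla xa])
  have ballb: "gball Gb r xb = eb ` words S r"
    unfolding eb_def Gb_def
    by (rule gball_action_graph[where D = Db and S = S and F = Fb, OF clb xb])
  have short: "words S r \<subseteq> words S (Suc r)" by (rule words_mono) simp
  have same': "ea u = ea v \<longleftrightarrow> eb u = eb v" if "u \<in> words S (Suc r)" "v \<in> words S (Suc r)" for u v
    using same[OF that] unfolding ea_def eb_def .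
  define \<psi> where "\<psi> y = ea (SOME u. u \<in> words S r \<and> eb u = y)" for y
  have \<psi>_eb: "\<psi> (eb u) = ea u" if "u \<in> words S r" for u
  proof -
    have "\<exists>u'. u' \<in> words S r \<and> eb u' = eb u" using that by blast
    then have "(SOME u'. u' \<in> words S r \<and> eb u' = eb u) \<in> words S r \<and>
               eb (SOME u'. u' \<in> words S r \<and> eb u' = eb u) = eb u"
      by (rule someI_ex)
    then show ?thesis unfolding \<psi>_def using same' that short by blast
  qed
  have "bij_betw \<psi> (gball Gb r xb) (gball Ga r xa)"
    unfolding balla ballb bij_betw_def
  proof
    show "inj_on \<psi> (eb ` words S r)"
    proof (rule inj_onI)
      fix y z assume "y \<in> eb ` words S r" "z \<in> eb ` words S r" "\<psi> y = \<psi> z"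
      then obtain u v where "u \<in> words S r" "v \<in> words S r" "y = eb u" "z = eb v" "ea u = ea v"
        using \<psi>_eb by auto
      then show "y = z" using same' short by blast
    qed
    show "\<psi> ` eb ` words S r = ea ` words S r" using \<psi>_eb by (auto simp: image_iff)
  qed
  moreover have "\<psi> xb = xa"
    using \<psi>_eb[of "[]"] unfolding ea_def eb_def words_def by simp
  moreover have "Gb (eb u) (eb v) \<longleftrightarrow> Ga (ea u) (ea v)" if "u \<in> words S r" "v \<in> words S r" for u v
  proof -
    have uv: "set u \<subseteq> S" "set v \<subseteq> S" using that unfolding words_def by auto
    have longer: "s # u \<in> words S (Suc r)" if "s \<in> S" for s
      using that \<open>u \<in> words S r\<close> unfolding words_def by auto
    have "Gb (eb u) (eb v) \<longleftrightarrow> eb u \<noteq> eb v \<and> (\<exists>s\<in>S. eb (s # u) = eb v)"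
      unfolding Gb_def eb_def
      by (rule action_graph_word_edge[where D = Db and S = S and F = Fb, OF clb xb uv])
    also have "\<dots> \<longleftrightarrow> ea u \<noteq> ea v \<and> (\<exists>s\<in>S. ea (s # u) = ea v)"
      using same' longer that short by blast
    also have "\<dots> \<longleftrightarrow> Ga (ea u) (ea v)"
      unfolding Ga_def ea_def
      by (rule action_graph_word_edge[where D = Da and S = S and F = Fa, OF cla xa uv, symmetric])
    finally show ?thesis .
  qed
  then have "Gb y z \<longleftrightarrow> Ga (\<psi> y) (\<psi> z)" if "y \<in> gball Gb r xb" "z \<in> gball Gb r xb" for y z
    using that \<psi>_eb unfolding ballb by auto
  ultimately show thesis using that by blast
qed

lemma nbhd_iso_transfer:
  assumes cla: "\<And>s y. s \<in> S \<Longrightarrow> y \<in> Da \<Longrightarrow> Fa s y \<in> Da" and xa: "xa \<in> Da"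
    and clb: "\<And>s y. s \<in> S \<Longrightarrow> y \<in> Db \<Longrightarrow> Fb s y \<in> Db" and xb: "xb \<in> Db"
    and same: "\<And>u v. u \<in> words S (Suc r) \<Longrightarrow> v \<in> words S (Suc r) \<Longrightarrow>
                 act_word Fa u xa = act_word Fa v xa \<longleftrightarrow> act_word Fb u xb = act_word Fb v xb"
    and iso: "nbhd_iso (action_graph Da S Fa) r xa V E h"
  shows "nbhd_iso (action_graph Db S Fb) r xb V E h"
proof -
  let ?Ga = "action_graph Da S Fa" and ?Gb = "action_graph Db S Fb"
  obtain f where f: "bij_betw f (gball ?Ga r xa) V" "f xa = h"
    "\<forall>y\<in>gball ?Ga r xa. \<forall>z\<in>gball ?Ga r xa. ?Ga y z \<longleftrightarrow> E (f y) (f z)"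
    using iso unfolding nbhd_iso_def by blast
  obtain \<psi> where \<psi>: "bij_betw \<psi> (gball ?Gb r xb) (gball ?Ga r xa)" "\<psi> xb = xa"
    "\<And>y z. y \<in> gball ?Gb r xb \<Longrightarrow> z \<in> gball ?Gb r xb \<Longrightarrow> ?Gb y z \<longleftrightarrow> ?Ga (\<psi> y) (\<psi> z)"
    using gball_iso_of_same_pattern[OF cla xa clb xb same] by blast
  have "bij_betw (f \<circ> \<psi>) (gball ?Gb r xb) V" using bij_betw_trans[OF \<psi>(1) f(1)] .
  moreover have "?Gb y z \<longleftrightarrow> E ((f \<circ> \<psi>) y) ((f \<circ> \<psi>) z)"
    if "y \<in> gball ?Gb r xb" "z \<in> gball ?Gb r xb" for y z
    using \<psi>(3)[OF that] f(3) bij_betwE[OF \<psi>(1)] that by auto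
  ultimately show ?thesis unfolding nbhd_iso_def using \<psi>(2) f(2) by auto
qed

section \<open>The Schreier graph and the graphing as action graphs\<close>

lemma schreier_graph_action: "schreier_graph S = action_graph UNIV S (\<lambda>s. s)"
  unfolding schreier_graph_def action_graph_def by auto

lemma graphing_action: "graphing S = action_graph betaX S ext_map"
  unfolding graphing_def action_graph_def by auto

lemma act_word_points: "act_word (\<lambda>s. s) u x = foldr (\<circ>) u id x"
  by (induction u) auto

lemma act_word_ext_map: "act_word ext_map u w = ext_map (foldr (\<circ>) u id) w"
proof (induction u)
  case Nil
  then show ?case using ext_map_id[of w, unfolded id_def] by simp
next
  case (Cons s u)
  have "foldr (\<circ>) (s # u) id = s \<circ> foldr (\<circ>) u id" by simp
  then show ?case using Cons.IH by (simp only: act_word.simps ext_map_comp)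
qed

lemma act_word_ext_map_eq_iff:
  assumes "countable (UNIV :: 'a set)" "\<And>s. s \<in> S \<Longrightarrow> bij (s :: 'a \<Rightarrow> 'a)"
    "w \<in> betaX" "set u \<subseteq> S" "set v \<subseteq> S"
  shows "act_word ext_map u w = act_word ext_map v w \<longleftrightarrow>
         {x. act_word (\<lambda>s. s) u x = act_word (\<lambda>s. s) v x} \<in> w"
proof -
  have "bij (foldr (\<circ>) t id)" if "set t \<subseteq> S" for t
    using that by (induction t) (auto simp: assms(2) intro: bij_comp)
  then show ?thesis
    unfolding act_word_ext_map act_word_points
    using ext_map_eq_iff[OF assms(1) _ _ assms(3)] assms(4,5) by blast
qed

lemma nbhd_iso_point_ultrafilter:
  assumes "countable (UNIV :: 'a set)" "\<And>s. s \<in> S \<Longrightarrow> bij (s :: 'a \<Rightarrow> 'a)" "w \<in> betaX"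
    and pattern: "\<And>u v. u \<in> words S (Suc r) \<Longrightarrow> v \<in> words S (Suc r) \<Longrightarrow>
      act_word (\<lambda>s. s) u x = act_word (\<lambda>s. s) v x \<longleftrightarrow>
      {y. act_word (\<lambda>s. s) u y = act_word (\<lambda>s. s) v y} \<in> w"
  shows "nbhd_iso (schreier_graph S) r x V E h \<longleftrightarrow> nbhd_iso (graphing S) r w V E h"
proof -
  have closed_ext: "\<And>s y. s \<in> S \<Longrightarrow> y \<in> betaX \<Longrightarrow> ext_map s y \<in> betaX"
    using ext_map_betaX assms(2) by blast
  have same: "act_word (\<lambda>s. s) u x = act_word (\<lambda>s. s) v x \<longleftrightarrow>
              act_word ext_map u w = act_word ext_map v w"
    if "u \<in> words S (Suc r)" "v \<in> words S (Suc r)" for u v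
  proof -
    have "set u \<subseteq> S" "set v \<subseteq> S" using that unfolding words_def by auto
    then show ?thesis using pattern[OF that] act_word_ext_map_eq_iff[OF assms(1-3)] by simp
  qed
  have "nbhd_iso (action_graph UNIV S (\<lambda>s. s)) r x V E h \<longleftrightarrow>
        nbhd_iso (action_graph betaX S ext_map) r w V E h"
  proof
    assume "nbhd_iso (action_graph UNIV S (\<lambda>s. s)) r x V E h"
    then show "nbhd_iso (action_graph betaX S ext_map) r w V E h"
      by (rule nbhd_iso_transfer[rotated 5]) (simp_all add: closed_ext assms(3) same)
  next
    assume "nbhd_iso (action_graph betaX S ext_map) r w V E h"
    then show "nbhd_iso (action_graph UNIV S (\<lambda>s. s)) r x V E h"
      by (rule nbhd_iso_transfer[rotated 5]) (simp_all add: closed_ext assms(3) same)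
  qed
  then show ?thesis by (simp add: schreier_graph_action graphing_action)
qed

(* An ultrafilter w contains a set Q of points sharing its coincidence pattern, so membership
   of w in A(G(T),H) is decided by the points of Q. *)
lemma Aset_graphing:
  assumes "countable (UNIV :: 'a set)" "sym_gen_set (S :: ('a \<Rightarrow> 'a) set)"
  shows "Aset betaX (graphing S) r V E h = UA (Aset UNIV (schreier_graph S) r V E h)"
proof (intro set_eqI)
  fix w
  have bijS: "\<And>s. s \<in> S \<Longrightarrow> bij s" and "finite S"
    using assms(2) unfolding sym_gen_set_def by auto
  let ?W = "words S (Suc r)"
  let ?A = "Aset UNIV (schreier_graph S) r V E h"
  let ?coincide = "\<lambda>(u, v). {x. act_word (\<lambda>s. s) u x = act_word (\<lambda>s. s) v x}"
  show "w \<in> Aset betaX (graphing S) r V E h \<longleftrightarrow> w \<in> UA ?A"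
  proof (cases "w \<in> betaX")
    case False
    then show ?thesis by (simp add: Aset_def UA_def)
  next
    case w: True
    obtain Q where "Q \<in> w"
      and Q: "\<And>x i. x \<in> Q \<Longrightarrow> i \<in> ?W \<times> ?W \<Longrightarrow> x \<in> ?coincide i \<longleftrightarrow> ?coincide i \<in> w"
      using uf_atom[OF w, of "?W \<times> ?W" ?coincide] finite_words[OF \<open>finite S\<close>] by blast
    have "x \<in> ?A \<longleftrightarrow> nbhd_iso (graphing S) r w V E h" if "x \<in> Q" for x
    proof -
      have "act_word (\<lambda>s. s) u x = act_word (\<lambda>s. s) v x \<longleftrightarrow>
            {y. act_word (\<lambda>s. s) u y = act_word (\<lambda>s. s) v y} \<in> w"
        if "u \<in> ?W" "v \<in> ?W" for u v
        using Q[OF \<open>x \<in> Q\<close>, of "(u, v)"] that by simp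
      from nbhd_iso_point_ultrafilter[where S = S, OF assms(1) bijS w this]
      show ?thesis by (simp add: Aset_def)
    qed
    then have "?A \<in> w \<longleftrightarrow> nbhd_iso (graphing S) r w V E h" by (rule uf_decides[OF w \<open>Q \<in> w\<close>])
    then show ?thesis using w by (simp add: Aset_def UA_def)
  qed
qed

theorem proposition4p3:
  fixes T :: "'a \<Rightarrow> 'a \<Rightarrow> bool" and d :: nat and \<mu> :: "'a set \<Rightarrow> real"
    and S :: "('a \<Rightarrow> 'a) set" and M :: "'a set set measure"
    and r :: nat and V :: "'c set" and E :: "'c \<Rightarrow> 'c \<Rightarrow> bool" and h :: 'c
  assumes "countable (UNIV :: 'a set)" and "infinite (UNIV :: 'a set)"
    and "max_degree_le UNIV T d"
    and "sym_gen_set S" and "schreier_graph S = T"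
    and "is_mean \<mu>" and "invariant_mean S \<mu>"
    and "regular_borel_prob M" and "\<forall>A. measure M (UA A) = \<mu> A"
    and "r \<ge> 1" and "rooted_graph_radius V E h r" and "max_degree_le V E d"
  shows "Aset betaX (graphing S) r V E h \<in> sets M \<and>
         \<mu> (Aset UNIV T r V E h) = measure M (Aset betaX (graphing S) r V E h)"
proof -
  have A: "Aset betaX (graphing S) r V E h = UA (Aset UNIV T r V E h)"
    using Aset_graphing[OF assms(1,4)] assms(5) by simp
  have "stone_open (UA (Aset UNIV T r V E h))"
    unfolding stone_open_def UA_def by blast
  then have "UA (Aset UNIV T r V E h) \<in> sets M"
    using assms(8) unfolding regular_borel_prob_def by (auto intro: sigma_sets.Basic)
  then show ?thesis using A assms(9) by simp
qed

end
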